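(* The axiom system $APAL_{int}$ is complete with respect to the class of all topo-models: for every formula $\varphi\in\mathcal{L}_{APAL_{int}}$, if $\varphi$ is valid in every topo-model, then $\varphi$ is a theorem of $APAL_{int}$.
   Context: Fix a countable set $\mathit{Prop}$ of propositional variables and a finite non-empty set $\mathcal{A}$ of agents. $\mathcal{L}_{APAL_{int}}$: $\varphi ::= p \mid \neg\varphi \mid \varphi\wedge\varphi \mid K_i\varphi \mid \mathrm{int}(\varphi)\mid [\varphi]\varphi\mid\Box\varphi$; $\mathcal{L}_{PAL_{int}}$ is its $\Box$-free fragment; $\bot:=p\wedge\neg p$, other connectives are abbreviations. Topo-models: $(X,\tau)$ a topological space with interior operator $\mathrm{Int}$. A neighbourhood function set $\Phi$ is a set of partial functions $\theta$ from $X$ to functions $\mathcal{A}\to\tau$ such that for all $x,y\in Dom(\theta)$, $i\in\mathcal{A}$, $U\in\tau$: (1) $\theta(x)(i)\in\tau$; (2) $x\in\theta(x)(i)$; (3) $\theta(x)(i)\subseteq Dom(\theta)$; (4) $y\in\theta(x)(i)$ implies $\theta(x)(i)=\theta(y)(i)$; (5) $\theta|_U\in\Phi$, where $Dom(\theta|_U)=Dom(\theta)\cap U$, $\theta|_U(x)(i)=\theta(x)(i)\cap U$. A topo-model is $(X,\tau,\Phi,V)$ with $V(p)\subseteq X$. Neighbourhood situations are $(x,\theta)$, $\theta\in\Phi$, $x\in Dom(\theta)$. Semantics: $(x,\theta)\models p$ iff $x\in V(p)$; Booleans usual; $(x,\theta)\models K_i\varphi$ iff $(y,\theta)\models\varphi$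 for all $y\in\theta(x)(i)$; $(x,\theta)\models\mathrm{int}(\varphi)$ iff $x\in\mathrm{Int}([\![\varphi]\!]^\theta)$ with $[\![\varphi]\!]^\theta=\{y\in Dom(\theta)\mid(y,\theta)\models\varphi\}$; $(x,\theta)\models[\varphi]\psi$ iff $(x,\theta)\models\mathrm{int}(\varphi)$ implies $(x,\theta^\varphi)\models\psi$, with $\theta^\varphi=\theta|_{\mathrm{Int}([\![\varphi]\!]^\theta)}$; $(x,\theta)\models\Box\varphi$ iff $(x,\theta)\models[\psi]\varphi$ for all $\psi\in\mathcal{L}_{PAL_{int}}$. Validity = truth at all neighbourhood situations. Necessity forms: $\xi(\sharp)::=\sharp\mid\varphi\to\xi(\sharp)\mid K_i\xi(\sharp)\mid\mathrm{int}(\xi(\sharp))\mid[\varphi]\xi(\sharp)$; $\xi(\varphi)$ replaces the unique $\sharp$ by $\varphi$. $APAL_{int}$: axioms: propositional tautologies; $K_i(\varphi\to\psi)\to(K_i\varphi\to K_i\psi)$; $K_i\varphi\to\varphi$; $K_i\varphi\to K_iK_i\varphi$; $\neg K_i\varphi\to K_i\neg K_i\varphi$; $\mathrm{int}(\varphi\to\psi)\to(\mathrm{int}(\varphi)\to\mathrm{int}(\psi))$; $\mathrm{int}(\varphi)\to\varphi$; $\mathrm{int}(\varphi)\to\mathrm{int}(\mathrm{int}(\varphi))$; $K_i\varphi\to\mathrm{int}(\varphi)$; (R1) $[\varphi]p\leftrightarrow(\mathrm{int}(\varphi)\to p)$; (R2) $[\varphi]\neg\psi\leftrightarrow(\mathrm{int}(\varphi)\to\neg[\varphi]\psi)$;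 (R3) $[\varphi](\psi\wedge\chi)\leftrightarrow[\varphi]\psi\wedge[\varphi]\chi$; (R4) $[\varphi]\mathrm{int}(\psi)\leftrightarrow(\mathrm{int}(\varphi)\to\mathrm{int}([\varphi]\psi))$; (R5) $[\varphi]K_i\psi\leftrightarrow(\mathrm{int}(\varphi)\to K_i[\varphi]\psi)$; (R6) $[\varphi][\psi]\chi\leftrightarrow[\neg[\varphi]\neg\mathrm{int}(\psi)]\chi$; (R7) $\Box\varphi\to[\chi]\varphi$ for $\chi\in\mathcal{L}_{PAL_{int}}$. Rules: modus ponens; from $\varphi$ infer $K_i\varphi$; from $\varphi$ infer $\mathrm{int}(\varphi)$; from $\varphi$ infer $[\psi]\varphi$; (DR5) from $\xi([\psi]\chi)$ for all $\psi\in\mathcal{L}_{PAL_{int}}$ infer $\xi(\Box\chi)$. Theorems: smallest set containing the axioms and closed under the rules. *)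

theory Defs
  imports "HOL-Analysis.Analysis"
begin

datatype ('p, 'a) fm =
    Atom 'p
  | Neg "('p, 'a) fm"
  | Conj "('p, 'a) fm" "('p, 'a) fm"
  | K 'a "('p, 'a) fm"
  | IntOp "('p, 'a) fm"
  | Ann "('p, 'a) fm" "('p, 'a) fm"   (* Ann phi psi = [phi] psi *)
  | Box "('p, 'a) fm"

abbreviation Imp :: "('p, 'a) fm \<Rightarrow> ('p, 'a) fm \<Rightarrow> ('p, 'a) fm" where
  "Imp a b \<equiv> Neg (Conj a (Neg b))"

abbreviation Iff :: "('p, 'a) fm \<Rightarrow> ('p, 'a) fm \<Rightarrow> ('p, 'a) fm" where
  "Iff a b \<equiv> Conj (Imp a b) (Imp b a)"

fun pal :: "('p, 'a) fm \<Rightarrow> bool" where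
  "pal (Atom p) = True"
| "pal (Neg a) = pal a"
| "pal (Conj a b) = (pal a \<and> pal b)"
| "pal (K i a) = pal a"
| "pal (IntOp a) = pal a"
| "pal (Ann a b) = (pal a \<and> pal b)"
| "pal (Box a) = False"

fun boxdepth :: "('p, 'a) fm \<Rightarrow> nat" where
  "boxdepth (Atom p) = 0"
| "boxdepth (Neg a) = boxdepth a"
| "boxdepth (Conj a b) = max (boxdepth a) (boxdepth b)"
| "boxdepth (K i a) = boxdepth a"
| "boxdepth (IntOp a) = boxdepth a"
| "boxdepth (Ann a b) = max (boxdepth a) (boxdepth b)"
| "boxdepth (Box a) = Suc (boxdepth a)"

lemma pal_boxdepth: "pal a \<Longrightarrow> boxdepth a = 0"
  by (induction a) auto

text \<open>A partial function from X to functions A -> tau is represented as a map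
  'x \<Rightarrow> ('a \<Rightarrow> 'x set) option; its domain is dom theta.\<close>
type_synonym ('x, 'a) nfun = "'x \<Rightarrow> ('a \<Rightarrow> 'x set) option"

definition nb :: "('x, 'a) nfun \<Rightarrow> 'x \<Rightarrow> 'a \<Rightarrow> 'x set" where
  "nb \<theta> x i = the (\<theta> x) i"

definition restr :: "('x, 'a) nfun \<Rightarrow> 'x set \<Rightarrow> ('x, 'a) nfun" where
  "restr \<theta> U = (\<lambda>x. if x \<in> U then map_option (\<lambda>f i. f i \<inter> U) (\<theta> x) else None)"

definition nbhd_fun :: "'x topology \<Rightarrow> ('x, 'a) nfun \<Rightarrow> bool" where
  "nbhd_fun T \<theta> \<longleftrightarrow> dom \<theta> \<subseteq> topspace T \<and>
     (\<forall>x\<in>dom \<theta>. \<forall>i. openin T (nb \<theta> x i) \<and> x \<in> nb \<theta> x i \<and> nb \<theta> x i \<subseteq> dom \<theta> \<and>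
        (\<forall>y\<in>dom \<theta>. y \<in> nb \<theta> x i \<longrightarrow> nb \<theta> x i = nb \<theta> y i))"

definition nbhd_set :: "'x topology \<Rightarrow> ('x, 'a) nfun set \<Rightarrow> bool" where
  "nbhd_set T \<Phi> \<longleftrightarrow> (\<forall>\<theta>\<in>\<Phi>. nbhd_fun T \<theta> \<and> (\<forall>U. openin T U \<longrightarrow> restr \<theta> U \<in> \<Phi>))"

definition topo_model :: "'x topology \<Rightarrow> ('x, 'a) nfun set \<Rightarrow> ('p \<Rightarrow> 'x set) \<Rightarrow> bool" where
  "topo_model T \<Phi> V \<longleftrightarrow> nbhd_set T \<Phi> \<and> (\<forall>p. V p \<subseteq> topspace T)"

text \<open>In the Box clause,
  (x,theta) |= [psi]phi is unfolded per its definition; the recursion terminates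
  since psi is Box-free (lexicographic measure: Box-depth, then size).\<close>
function sat :: "'x topology \<Rightarrow> ('p \<Rightarrow> 'x set) \<Rightarrow> ('x, 'a) nfun \<Rightarrow> 'x \<Rightarrow> ('p, 'a) fm \<Rightarrow> bool" where
  "sat T V \<theta> x (Atom p) = (x \<in> V p)"
| "sat T V \<theta> x (Neg a) = (\<not> sat T V \<theta> x a)"
| "sat T V \<theta> x (Conj a b) = (sat T V \<theta> x a \<and> sat T V \<theta> x b)"
| "sat T V \<theta> x (K i a) = (\<forall>y\<in>nb \<theta> x i. sat T V \<theta> y a)"
| "sat T V \<theta> x (IntOp a) = (x \<in> T interior_of {y\<in>dom \<theta>. sat T V \<theta> y a})"
| "sat T V \<theta> x (Ann a b) =
     (x \<in> T interior_of {y\<in>dom \<theta>. sat T V \<theta> y a} \<longrightarrow>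
      sat T V (restr \<theta> (T interior_of {y\<in>dom \<theta>. sat T V \<theta> y a})) x b)"
| "sat T V \<theta> x (Box a) =
     (\<forall>c\<in>{c. pal c}.
        x \<in> T interior_of {y\<in>dom \<theta>. sat T V \<theta> y c} \<longrightarrow>
        sat T V (restr \<theta> (T interior_of {y\<in>dom \<theta>. sat T V \<theta> y c})) x a)"
  by pat_completeness auto
termination
  by (relation "inv_image (less_than <*lex*> less_than) (\<lambda>(T, V, \<theta>, x, a). (boxdepth a, size a))")
     (auto simp: pal_boxdepth)

definition valid_in :: "'x itself \<Rightarrow> ('p, 'a) fm \<Rightarrow> bool" where
  "valid_in _ \<phi> \<longleftrightarrow> (\<forall>(T :: 'x topology) \<Phi> V. topo_model T \<Phi> V \<longrightarrow>
      (\<forall>\<theta>\<in>\<Phi>. \<forall>x\<in>dom \<theta>. sat T V \<theta> x \<phi>))"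

text \<open>Propositional tautologies: formulas true under every Boolean valuation that
  treats all non-Boolean subformulas as atoms (= instances of propositional tautologies).\<close>
fun pval :: "(('p, 'a) fm \<Rightarrow> bool) \<Rightarrow> ('p, 'a) fm \<Rightarrow> bool" where
  "pval v (Neg a) = (\<not> pval v a)"
| "pval v (Conj a b) = (pval v a \<and> pval v b)"
| "pval v a = v a"

definition tautology :: "('p, 'a) fm \<Rightarrow> bool" where
  "tautology \<phi> \<longleftrightarrow> (\<forall>v. pval v \<phi>)"

datatype ('p, 'a) nform =
    Hole
  | NImp "('p, 'a) fm" "('p, 'a) nform"
  | NK 'a "('p, 'a) nform"
  | NInt "('p, 'a) nform"
  | NAnn "('p, 'a) fm" "('p, 'a) nform"

fun fill :: "('p, 'a) nform \<Rightarrow> ('p, 'a) fm \<Rightarrow> ('p, 'a) fm" where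
  "fill Hole c = c"
| "fill (NImp a \<xi>) c = Imp a (fill \<xi> c)"
| "fill (NK i \<xi>) c = K i (fill \<xi> c)"
| "fill (NInt \<xi>) c = IntOp (fill \<xi> c)"
| "fill (NAnn a \<xi>) c = Ann a (fill \<xi> c)"

inductive apal_thm :: "('p, 'a) fm \<Rightarrow> bool" where
  Taut: "tautology \<phi> \<Longrightarrow> apal_thm \<phi>"
| K_K: "apal_thm (Imp (K i (Imp \<phi> \<psi>)) (Imp (K i \<phi>) (K i \<psi>)))"
| K_T: "apal_thm (Imp (K i \<phi>) \<phi>)"
| K_4: "apal_thm (Imp (K i \<phi>) (K i (K i \<phi>)))"
| K_5: "apal_thm (Imp (Neg (K i \<phi>)) (K i (Neg (K i \<phi>))))"
| Int_K: "apal_thm (Imp (IntOp (Imp \<phi> \<psi>)) (Imp (IntOp \<phi>) (IntOp \<psi>)))"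
| Int_T: "apal_thm (Imp (IntOp \<phi>) \<phi>)"
| Int_4: "apal_thm (Imp (IntOp \<phi>) (IntOp (IntOp \<phi>)))"
| K_Int: "apal_thm (Imp (K i \<phi>) (IntOp \<phi>))"
| R1: "apal_thm (Iff (Ann \<phi> (Atom p)) (Imp (IntOp \<phi>) (Atom p)))"
| R2: "apal_thm (Iff (Ann \<phi> (Neg \<psi>)) (Imp (IntOp \<phi>) (Neg (Ann \<phi> \<psi>))))"
| R3: "apal_thm (Iff (Ann \<phi> (Conj \<psi> \<rho>)) (Conj (Ann \<phi> \<psi>) (Ann \<phi> \<rho>)))"
| R4: "apal_thm (Iff (Ann \<phi> (IntOp \<psi>)) (Imp (IntOp \<phi>) (IntOp (Ann \<phi> \<psi>))))"
| R5: "apal_thm (Iff (Ann \<phi> (K i \<psi>)) (Imp (IntOp \<phi>) (K i (Ann \<phi> \<psi>))))"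
| R6: "apal_thm (Iff (Ann \<phi> (Ann \<psi> \<rho>)) (Ann (Neg (Ann \<phi> (Neg (IntOp \<psi>)))) \<rho>))"
| R7: "pal \<rho> \<Longrightarrow> apal_thm (Imp (Box \<phi>) (Ann \<rho> \<phi>))"
| MP: "apal_thm (Imp \<phi> \<psi>) \<Longrightarrow> apal_thm \<phi> \<Longrightarrow> apal_thm \<psi>"
| NecK: "apal_thm \<phi> \<Longrightarrow> apal_thm (K i \<phi>)"
| NecInt: "apal_thm \<phi> \<Longrightarrow> apal_thm (IntOp \<phi>)"
| NecAnn: "apal_thm \<phi> \<Longrightarrow> apal_thm (Ann \<psi> \<phi>)"
| DR5: "(\<forall>\<psi>. pal \<psi> \<longrightarrow> apal_thm (fill \<xi> (Ann \<psi> \<rho>))) \<Longrightarrow> apal_thm (fill \<xi> (Box \<rho>))"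

end

theory Submission
  imports Defs
begin

text \<open>A Lindenbaum construction that,
  next to each formula it cannot add, adds a Box-free counterexample to it whenever that
  formula has the shape \<open>\<xi>(\<box>\<gamma>)\<close>, extends every consistent theory to a maximal
  consistent one that is again closed under DR5. The maximal consistent sets form a
  topo-model, and a truth lemma, proved by induction on Box-depth and then size (so that
  \<open>\<box>\<gamma>\<close> may appeal to every \<open>[\<psi>]\<gamma>\<close> with \<open>\<psi>\<close> Box-free), shows that a formula valid in it
  lies in every maximal consistent set, hence is a theorem. The clause for announcements
  needs a truth lemma for the updated models first, where \<open>\<gamma>\<close> holds after announcing \<open>\<psi>\<close>
  iff \<open>[\<psi>]\<gamma>\<close> is in the maximal consistent set; the reduction axioms R1--R6 and DR5 drive
  its induction.\<close>

instance fm :: (countable, countable) countable by countable_datatype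

definition falsum :: "('p, 'a) fm" where
  "falsum = Conj (Atom undefined) (Neg (Atom undefined))"

lemma pval_falsum [simp]: "pval v falsum = False"
  by (simp add: falsum_def)

definition apal_theory :: "('p, 'a) fm set \<Rightarrow> bool" where
  "apal_theory G \<longleftrightarrow> (\<forall>\<phi>. apal_thm \<phi> \<longrightarrow> \<phi> \<in> G)
     \<and> (\<forall>\<phi> \<psi>. Imp \<phi> \<psi> \<in> G \<longrightarrow> \<phi> \<in> G \<longrightarrow> \<psi> \<in> G)
     \<and> (\<forall>\<xi> \<gamma>. (\<forall>\<psi>. pal \<psi> \<longrightarrow> fill \<xi> (Ann \<psi> \<gamma>) \<in> G) \<longrightarrow> fill \<xi> (Box \<gamma>) \<in> G)"

definition consistent :: "('p, 'a) fm set \<Rightarrow> bool" where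
  "consistent G \<longleftrightarrow> falsum \<notin> G"

definition mcs :: "('p, 'a) fm set \<Rightarrow> bool" where
  "mcs G \<longleftrightarrow> apal_theory G \<and> consistent G \<and> (\<forall>\<phi>. \<phi> \<in> G \<or> Neg \<phi> \<in> G)"

definition verum :: "('p, 'a) fm" where
  "verum = Neg falsum"

lemma tautology_verum: "tautology verum"
  by (simp add: verum_def tautology_def)

lemma apal_theory_thm: "apal_theory G \<Longrightarrow> apal_thm \<phi> \<Longrightarrow> \<phi> \<in> G"
  by (simp add: apal_theory_def)

lemma apal_theory_mp: "apal_theory G \<Longrightarrow> Imp \<phi> \<psi> \<in> G \<Longrightarrow> \<phi> \<in> G \<Longrightarrow> \<psi> \<in> G"
  by (simp add: apal_theory_def)

lemma apal_theory_DR5: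
  "apal_theory G \<Longrightarrow> (\<And>\<psi>. pal \<psi> \<Longrightarrow> fill \<xi> (Ann \<psi> \<gamma>) \<in> G) \<Longrightarrow> fill \<xi> (Box \<gamma>) \<in> G"
  by (simp add: apal_theory_def)

lemma apal_theory_taut_mp:
  "apal_theory G \<Longrightarrow> tautology (Imp \<phi> \<psi>) \<Longrightarrow> \<phi> \<in> G \<Longrightarrow> \<psi> \<in> G"
  by (meson Taut apal_theory_mp apal_theory_thm)

lemma apal_theory_taut_mp2:
  "apal_theory G \<Longrightarrow> tautology (Imp \<phi> (Imp \<psi> \<rho>)) \<Longrightarrow> \<phi> \<in> G \<Longrightarrow> \<psi> \<in> G \<Longrightarrow> \<rho> \<in> G"
  by (meson Taut apal_theory_mp apal_theory_thm)

lemma apal_theory_Neg_notin: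
  "apal_theory G \<Longrightarrow> consistent G \<Longrightarrow> Neg \<phi> \<in> G \<Longrightarrow> \<phi> \<notin> G"
  unfolding consistent_def
  using apal_theory_taut_mp2[of G \<phi> "Neg \<phi>" falsum] by (auto simp: tautology_def)

lemma apal_theory_apal_thm: "apal_theory {\<phi>. apal_thm \<phi>}"
  unfolding apal_theory_def by (auto intro: MP DR5)

fun graft :: "('p, 'a) nform \<Rightarrow> ('p, 'a) nform \<Rightarrow> ('p, 'a) nform" where
  "graft Hole \<zeta> = \<zeta>"
| "graft (NImp a \<xi>) \<zeta> = NImp a (graft \<xi> \<zeta>)"
| "graft (NK i \<xi>) \<zeta> = NK i (graft \<xi> \<zeta>)"
| "graft (NInt \<xi>) \<zeta> = NInt (graft \<xi> \<zeta>)"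
| "graft (NAnn a \<xi>) \<zeta> = NAnn a (graft \<xi> \<zeta>)"

lemma fill_graft [simp]: "fill (graft \<xi> \<zeta>) c = fill \<xi> (fill \<zeta> c)"
  by (induction \<xi>) auto

lemma fill_Box_inj: "fill \<xi> (Box \<gamma>) = fill \<xi>' (Box \<gamma>') \<Longrightarrow> \<xi> = \<xi>' \<and> \<gamma> = \<gamma>'"
  by (induction \<xi> arbitrary: \<xi>') (case_tac \<xi>'; auto)+

text \<open>Closure under DR5 is inherited because necessity forms compose.\<close>
lemma apal_theory_fill_preimage:
  assumes G: "apal_theory G"
    and nec: "\<And>\<gamma>. apal_thm \<gamma> \<Longrightarrow> fill \<xi> \<gamma> \<in> G"
    and dist: "\<And>\<phi> \<psi>. fill \<xi> (Imp \<phi> \<psi>) \<in> G \<Longrightarrow> fill \<xi> \<phi> \<in> G \<Longrightarrow> fill \<xi> \<psi> \<in> G"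
  shows "apal_theory {\<gamma>. fill \<xi> \<gamma> \<in> G}"
  unfolding apal_theory_def
proof (intro conjI allI impI; simp)
  fix \<zeta> \<gamma> assume "\<forall>\<psi>. pal \<psi> \<longrightarrow> fill \<xi> (fill \<zeta> (Ann \<psi> \<gamma>)) \<in> G"
  then have "fill (graft \<xi> \<zeta>) (Box \<gamma>) \<in> G"
    using apal_theory_DR5[OF G, of "graft \<xi> \<zeta>" \<gamma>] by simp
  then show "fill \<xi> (fill \<zeta> (Box \<gamma>)) \<in> G" by simp
qed (use nec dist in auto)

definition extend :: "('p, 'a) fm set \<Rightarrow> ('p, 'a) fm \<Rightarrow> ('p, 'a) fm set" where
  "extend G \<phi> = {\<psi>. Imp \<phi> \<psi> \<in> G}"

lemma apal_theory_extend:
  assumes G: "apal_theory G" shows "apal_theory (extend G \<phi>)"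
proof -
  have "apal_theory {\<gamma>. fill (NImp \<phi> Hole) \<gamma> \<in> G}"
  proof (rule apal_theory_fill_preimage[OF G])
    show "fill (NImp \<phi> Hole) \<gamma> \<in> G" if "apal_thm \<gamma>" for \<gamma>
      using that MP[of \<gamma> "Imp \<phi> \<gamma>"] Taut[of "Imp \<gamma> (Imp \<phi> \<gamma>)"]
      by (auto intro: apal_theory_thm[OF G] simp: tautology_def)
    show "fill (NImp \<phi> Hole) \<psi> \<in> G"
      if "fill (NImp \<phi> Hole) (Imp \<rho> \<psi>) \<in> G" "fill (NImp \<phi> Hole) \<rho> \<in> G" for \<rho> \<psi>
      using that apal_theory_taut_mp2[OF G, of "Imp \<phi> (Imp \<rho> \<psi>)" "Imp \<phi> \<rho>"]
      by (auto simp: tautology_def)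
  qed
  then show ?thesis by (simp add: extend_def)
qed

lemma subset_extend: "apal_theory G \<Longrightarrow> G \<subseteq> extend G \<phi>"
  unfolding extend_def by (auto intro: apal_theory_taut_mp simp: tautology_def)

lemma mem_extend: "apal_theory G \<Longrightarrow> \<phi> \<in> extend G \<phi>"
  unfolding extend_def by (simp add: apal_theory_thm Taut tautology_def)

lemma consistent_extend_iff:
  assumes "apal_theory G" shows "consistent (extend G \<phi>) \<longleftrightarrow> Neg \<phi> \<notin> G"
  unfolding extend_def consistent_def
  using apal_theory_taut_mp[OF assms, of "Imp \<phi> falsum" "Neg \<phi>"]
    apal_theory_taut_mp[OF assms, of "Neg \<phi>" "Imp \<phi> falsum"]
  by (auto simp: tautology_def)

section \<open>Lindenbaum lemma\<close>

text \<open>When the candidate \<open>\<xi>(\<box>\<gamma>)\<close> is inconsistent with the current stage, the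
  construction adds a consistent counterexample \<open>\<not>\<xi>([\<psi>]\<gamma>)\<close> with Box-free \<open>\<psi>\<close>
  instead; this is what makes the limit closed under DR5.\<close>
definition box_witness :: "('p, 'a) fm set \<Rightarrow> ('p, 'a) fm \<Rightarrow> ('p, 'a) fm \<Rightarrow> bool" where
  "box_witness G \<phi> \<rho> \<longleftrightarrow>
     (\<exists>\<xi> \<gamma> \<psi>. \<phi> = fill \<xi> (Box \<gamma>) \<and> pal \<psi> \<and> \<rho> = Neg (fill \<xi> (Ann \<psi> \<gamma>)))
     \<and> consistent (extend G \<rho>)"

definition lindenbaum_step :: "('p, 'a) fm set \<Rightarrow> ('p, 'a) fm \<Rightarrow> ('p, 'a) fm set" where
  "lindenbaum_step G \<phi> =
     (if consistent (extend G \<phi>) then extend G \<phi>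
      else if \<exists>\<rho>. box_witness G \<phi> \<rho> then extend G (SOME \<rho>. box_witness G \<phi> \<rho>)
      else G)"

lemma box_witness_exists:
  assumes G: "apal_theory G" "consistent G" and "\<not> consistent (extend G (fill \<xi> (Box \<gamma>)))"
  obtains \<psi> where "pal \<psi>" "box_witness G (fill \<xi> (Box \<gamma>)) (Neg (fill \<xi> (Ann \<psi> \<gamma>)))"
proof -
  have "fill \<xi> (Box \<gamma>) \<notin> G"
    using assms apal_theory_Neg_notin consistent_extend_iff by blast
  then obtain \<psi> where \<psi>: "pal \<psi>" "fill \<xi> (Ann \<psi> \<gamma>) \<notin> G"
    using apal_theory_DR5[OF G(1)] by blast
  then have "Neg (Neg (fill \<xi> (Ann \<psi> \<gamma>))) \<notin> G"
    using apal_theory_taut_mp[OF G(1), of "Neg (Neg (fill \<xi> (Ann \<psi> \<gamma>)))"]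
    by (auto simp: tautology_def)
  with \<psi> show thesis
    by (intro that) (auto simp: box_witness_def consistent_extend_iff[OF G(1)])
qed

lemma lindenbaum_step_theory:
  assumes "apal_theory G" "consistent G"
  shows "apal_theory (lindenbaum_step G \<phi>) \<and> consistent (lindenbaum_step G \<phi>)
    \<and> G \<subseteq> lindenbaum_step G \<phi>"
proof -
  have ext: "apal_theory (extend G \<rho>) \<and> G \<subseteq> extend G \<rho>" for \<rho>
    using assms(1) apal_theory_extend subset_extend by blast
  have "consistent (extend G (SOME \<rho>. box_witness G \<phi> \<rho>))" if "\<exists>\<rho>. box_witness G \<phi> \<rho>"
    using someI_ex[OF that] by (simp add: box_witness_def)
  then show ?thesis
    using assms ext unfolding lindenbaum_step_def by auto
qed

fun lindenbaum_chain :: "('p::countable, 'a::countable) fm set \<Rightarrow> nat \<Rightarrow> ('p, 'a) fm set" where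
  "lindenbaum_chain G 0 = G"
| "lindenbaum_chain G (Suc n) = lindenbaum_step (lindenbaum_chain G n) (from_nat n)"

definition lindenbaum_limit :: "('p::countable, 'a::countable) fm set \<Rightarrow> ('p, 'a) fm set" where
  "lindenbaum_limit G = (\<Union>n. lindenbaum_chain G n)"

context
  fixes G :: "('p::countable, 'a::countable) fm set"
  assumes G: "apal_theory G" "consistent G"
begin

lemma lindenbaum_chain_theory:
  "apal_theory (lindenbaum_chain G n) \<and> consistent (lindenbaum_chain G n)"
  by (induction n) (use G lindenbaum_step_theory in auto)

lemma incseq_lindenbaum_chain: "incseq (lindenbaum_chain G)"
  by (rule incseq_SucI) (use lindenbaum_step_theory lindenbaum_chain_theory in auto)

lemma lindenbaum_limit_common_stage:
  assumes "\<phi> \<in> lindenbaum_limit G" "\<psi> \<in> lindenbaum_limit G"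
  obtains n where "\<phi> \<in> lindenbaum_chain G n" "\<psi> \<in> lindenbaum_chain G n"
proof -
  obtain m k where "\<phi> \<in> lindenbaum_chain G m" "\<psi> \<in> lindenbaum_chain G k"
    using assms by (auto simp: lindenbaum_limit_def)
  then show thesis
    using incseq_lindenbaum_chain[THEN monoD, of m "max m k"]
      incseq_lindenbaum_chain[THEN monoD, of k "max m k"]
    by (intro that[of "max m k"]) auto
qed

lemma mem_lindenbaum_limit_if_consistent:
  assumes "consistent (extend (lindenbaum_chain G (to_nat \<phi>)) \<phi>)"
  shows "\<phi> \<in> lindenbaum_limit G"
proof -
  have "\<phi> \<in> lindenbaum_chain G (Suc (to_nat \<phi>))"
    using assms mem_extend[OF lindenbaum_chain_theory[THEN conjunct1]]
    by (simp add: lindenbaum_step_def)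
  then show ?thesis unfolding lindenbaum_limit_def by blast
qed

lemma lindenbaum_limit_DR5:
  assumes prem: "\<And>\<psi>. pal \<psi> \<Longrightarrow> fill \<xi> (Ann \<psi> \<gamma>) \<in> lindenbaum_limit G"
  shows "fill \<xi> (Box \<gamma>) \<in> lindenbaum_limit G"
proof (rule ccontr)
  let ?\<phi> = "fill \<xi> (Box \<gamma>)" and ?n = "to_nat (fill \<xi> (Box \<gamma>))"
  let ?G = "lindenbaum_chain G ?n"
  assume "?\<phi> \<notin> lindenbaum_limit G"
  then have incons: "\<not> consistent (extend ?G ?\<phi>)"
    using mem_lindenbaum_limit_if_consistent by blast
  obtain \<psi> where "box_witness ?G ?\<phi> (Neg (fill \<xi> (Ann \<psi> \<gamma>)))"
    using box_witness_exists[OF _ _ incons] lindenbaum_chain_theory by metis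
  then have ex: "\<exists>\<rho>. box_witness ?G ?\<phi> \<rho>" by blast
  then obtain \<xi>' \<gamma>' \<psi>' where \<psi>': "?\<phi> = fill \<xi>' (Box \<gamma>')" "pal \<psi>'"
    "(SOME \<rho>. box_witness ?G ?\<phi> \<rho>) = Neg (fill \<xi>' (Ann \<psi>' \<gamma>'))"
    using someI_ex[OF ex] unfolding box_witness_def by blast
  then have same: "\<xi>' = \<xi>" "\<gamma>' = \<gamma>" using fill_Box_inj by metis+
  have "lindenbaum_chain G (Suc ?n) = extend ?G (Neg (fill \<xi> (Ann \<psi>' \<gamma>)))"
    using incons ex \<psi>'(3) same by (simp add: lindenbaum_step_def)
  then have "Neg (fill \<xi> (Ann \<psi>' \<gamma>)) \<in> lindenbaum_limit G"
    using mem_extend lindenbaum_chain_theory unfolding lindenbaum_limit_def by blast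
  moreover have "fill \<xi> (Ann \<psi>' \<gamma>) \<in> lindenbaum_limit G" using prem \<psi>'(2) .
  ultimately obtain m where "Neg (fill \<xi> (Ann \<psi>' \<gamma>)) \<in> lindenbaum_chain G m"
    "fill \<xi> (Ann \<psi>' \<gamma>) \<in> lindenbaum_chain G m"
    by (rule lindenbaum_limit_common_stage)
  then show False using apal_theory_Neg_notin lindenbaum_chain_theory by blast
qed

lemma mcs_lindenbaum_limit: "mcs (lindenbaum_limit G)"
  unfolding mcs_def apal_theory_def
proof (intro conjI allI impI)
  show "\<phi> \<in> lindenbaum_limit G" if "apal_thm \<phi>" for \<phi>
    using apal_theory_thm[OF G(1) that] lindenbaum_chain.simps(1)
    unfolding lindenbaum_limit_def by blast
  show "\<psi> \<in> lindenbaum_limit G"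
    if "Imp \<phi> \<psi> \<in> lindenbaum_limit G" "\<phi> \<in> lindenbaum_limit G" for \<phi> \<psi>
    using lindenbaum_limit_common_stage[OF that] apal_theory_mp lindenbaum_chain_theory
    by (metis UN_I UNIV_I lindenbaum_limit_def)
  show "fill \<xi> (Box \<gamma>) \<in> lindenbaum_limit G"
    if "\<forall>\<psi>. pal \<psi> \<longrightarrow> fill \<xi> (Ann \<psi> \<gamma>) \<in> lindenbaum_limit G" for \<xi> \<gamma>
    using that lindenbaum_limit_DR5 by blast
  show "consistent (lindenbaum_limit G)"
    using lindenbaum_chain_theory by (auto simp: consistent_def lindenbaum_limit_def)
  show "\<phi> \<in> lindenbaum_limit G \<or> Neg \<phi> \<in> lindenbaum_limit G" for \<phi>
    using mem_lindenbaum_limit_if_consistent consistent_extend_iff lindenbaum_chain_theory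
    by (metis UN_I UNIV_I lindenbaum_limit_def)
qed

end

lemma lindenbaum:
  fixes D :: "('p::countable, 'a::countable) fm set"
  assumes "apal_theory D" "Neg \<phi> \<notin> D"
  obtains H where "mcs H" "D \<subseteq> H" "\<phi> \<in> H"
proof
  let ?G = "extend D \<phi>"
  have G: "apal_theory ?G" "consistent ?G"
    using assms apal_theory_extend consistent_extend_iff by blast+
  show "mcs (lindenbaum_limit ?G)" using mcs_lindenbaum_limit[OF G] .
  have "?G \<subseteq> lindenbaum_limit ?G"
    unfolding lindenbaum_limit_def using lindenbaum_chain.simps(1) by blast
  then show "D \<subseteq> lindenbaum_limit ?G" "\<phi> \<in> lindenbaum_limit ?G"
    using subset_extend[OF assms(1)] mem_extend[OF assms(1)] by blast+
qed

context
  fixes G :: "('p, 'a) fm set"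
  assumes G: "mcs G"
begin

lemma mcs_theory: "apal_theory G"
  using G by (simp add: mcs_def)

lemma mcs_thm: "apal_thm \<phi> \<Longrightarrow> \<phi> \<in> G"
  using apal_theory_thm[OF mcs_theory] .

lemma mcs_thm_mp: "apal_thm (Imp \<phi> \<psi>) \<Longrightarrow> \<phi> \<in> G \<Longrightarrow> \<psi> \<in> G"
  using apal_theory_mp[OF mcs_theory] mcs_thm by blast

lemma mcs_Neg [simp]: "Neg \<phi> \<in> G \<longleftrightarrow> \<phi> \<notin> G"
  using G apal_theory_Neg_notin unfolding mcs_def by blast

lemma mcs_Conj [simp]: "Conj \<phi> \<psi> \<in> G \<longleftrightarrow> \<phi> \<in> G \<and> \<psi> \<in> G"
proof -
  have "tautology (Imp (Conj \<phi> \<psi>) \<phi>)" "tautology (Imp (Conj \<phi> \<psi>) \<psi>)"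
    "tautology (Imp \<phi> (Imp \<psi> (Conj \<phi> \<psi>)))"
    by (simp_all add: tautology_def)
  then show ?thesis
    using apal_theory_taut_mp[OF mcs_theory] apal_theory_taut_mp2[OF mcs_theory] by blast
qed

lemma mcs_iff_thm: "apal_thm (Iff \<phi> \<psi>) \<Longrightarrow> \<phi> \<in> G \<longleftrightarrow> \<psi> \<in> G"
  by (drule mcs_thm) auto

lemma mcs_R1: "Ann \<psi> (Atom p) \<in> G \<longleftrightarrow> (IntOp \<psi> \<in> G \<longrightarrow> Atom p \<in> G)"
  using mcs_iff_thm[OF R1] by simp

lemma mcs_R2: "Ann \<psi> (Neg \<phi>) \<in> G \<longleftrightarrow> (IntOp \<psi> \<in> G \<longrightarrow> Ann \<psi> \<phi> \<notin> G)"
  using mcs_iff_thm[OF R2] by simp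

lemma mcs_R3: "Ann \<psi> (Conj \<phi> \<rho>) \<in> G \<longleftrightarrow> Ann \<psi> \<phi> \<in> G \<and> Ann \<psi> \<rho> \<in> G"
  using mcs_iff_thm[OF R3] by simp

lemma mcs_R4: "Ann \<psi> (IntOp \<phi>) \<in> G \<longleftrightarrow> (IntOp \<psi> \<in> G \<longrightarrow> IntOp (Ann \<psi> \<phi>) \<in> G)"
  using mcs_iff_thm[OF R4] by simp

lemma mcs_R5: "Ann \<psi> (K i \<phi>) \<in> G \<longleftrightarrow> (IntOp \<psi> \<in> G \<longrightarrow> K i (Ann \<psi> \<phi>) \<in> G)"
  using mcs_iff_thm[OF R5] by simp

lemma mcs_R6: "Ann \<psi> (Ann \<phi> \<rho>) \<in> G \<longleftrightarrow> Ann (Neg (Ann \<psi> (Neg (IntOp \<phi>)))) \<rho> \<in> G"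
  using mcs_iff_thm[OF R6] .

lemma mcs_Box_iff: "Box \<phi> \<in> G \<longleftrightarrow> (\<forall>\<psi>. pal \<psi> \<longrightarrow> Ann \<psi> \<phi> \<in> G)"
proof
  show "\<forall>\<psi>. pal \<psi> \<longrightarrow> Ann \<psi> \<phi> \<in> G" if "Box \<phi> \<in> G"
    using that mcs_thm_mp[OF R7] by blast
  show "Box \<phi> \<in> G" if "\<forall>\<psi>. pal \<psi> \<longrightarrow> Ann \<psi> \<phi> \<in> G"
    using that apal_theory_DR5[OF mcs_theory, of Hole \<phi>] by simp
qed

lemma mcs_IntOp_mp: "IntOp (Imp \<phi> \<psi>) \<in> G \<Longrightarrow> IntOp \<phi> \<in> G \<Longrightarrow> IntOp \<psi> \<in> G"
  using mcs_thm_mp[OF Int_K] by simp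

lemma mcs_IntOp_mono: "apal_thm (Imp \<phi> \<psi>) \<Longrightarrow> IntOp \<phi> \<in> G \<Longrightarrow> IntOp \<psi> \<in> G"
  by (rule mcs_IntOp_mp[OF mcs_thm[OF NecInt]])

lemma mcs_K_T: "K i \<phi> \<in> G \<Longrightarrow> \<phi> \<in> G"
  by (rule mcs_thm_mp[OF K_T])

lemma mcs_K_4: "K i \<phi> \<in> G \<Longrightarrow> K i (K i \<phi>) \<in> G"
  by (rule mcs_thm_mp[OF K_4])

lemma mcs_K_5: "K i \<phi> \<notin> G \<Longrightarrow> K i (Neg (K i \<phi>)) \<in> G"
  using mcs_thm_mp[OF K_5] by simp

lemma mcs_K_IntOp: "K i \<phi> \<in> G \<Longrightarrow> IntOp \<phi> \<in> G"
  by (rule mcs_thm_mp[OF K_Int])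

lemma mcs_K_mp: "K i (Imp \<phi> \<psi>) \<in> G \<Longrightarrow> K i \<phi> \<in> G \<Longrightarrow> K i \<psi> \<in> G"
  using mcs_thm_mp[OF K_K] by simp

lemma mcs_K_mono: "apal_thm (Imp \<phi> \<psi>) \<Longrightarrow> K i \<phi> \<in> G \<Longrightarrow> K i \<psi> \<in> G"
  by (rule mcs_K_mp[OF mcs_thm[OF NecK]])

lemma mcs_IntOp_Conj: "IntOp (Conj \<phi> \<psi>) \<in> G \<longleftrightarrow> IntOp \<phi> \<in> G \<and> IntOp \<psi> \<in> G"
proof -
  have "apal_thm (Imp (Conj \<phi> \<psi>) \<phi>)" "apal_thm (Imp (Conj \<phi> \<psi>) \<psi>)"
    "apal_thm (Imp \<phi> (Imp \<psi> (Conj \<phi> \<psi>)))"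
    by (rule Taut, simp add: tautology_def)+
  then show ?thesis using mcs_IntOp_mono mcs_IntOp_mp by metis
qed

lemma mcs_IntOp_T: "IntOp \<phi> \<in> G \<Longrightarrow> \<phi> \<in> G"
  by (rule mcs_thm_mp[OF Int_T])

lemma mcs_IntOp_IntOp: "IntOp (IntOp \<phi>) \<in> G \<longleftrightarrow> IntOp \<phi> \<in> G"
  using mcs_IntOp_T mcs_thm_mp[OF Int_4] by blast

lemma mcs_IntOp_verum: "IntOp verum \<in> G"
  by (rule mcs_thm[OF NecInt[OF Taut[OF tautology_verum]]])

lemma mcs_Ann_Ann_if_not_IntOp:
  assumes "\<And>\<psi>'. IntOp \<psi>' \<notin> G \<Longrightarrow> Ann \<psi>' \<rho> \<in> G" "IntOp \<psi> \<notin> G"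
  shows "Ann \<psi> (Ann \<phi> \<rho>) \<in> G"
proof -
  have "Neg (Ann \<psi> (Neg (IntOp \<phi>))) \<notin> G" using mcs_R2 assms(2) by simp
  then have "IntOp (Neg (Ann \<psi> (Neg (IntOp \<phi>)))) \<notin> G" using mcs_IntOp_T by blast
  then show ?thesis using assms(1) mcs_R6 by blast
qed

lemma mcs_Ann_if_not_IntOp: "IntOp \<psi> \<notin> G \<Longrightarrow> Ann \<psi> \<gamma> \<in> G"
proof (induction \<gamma> arbitrary: \<psi>)
  case (Ann \<phi> \<rho>)
  then show ?case using mcs_Ann_Ann_if_not_IntOp by blast
next
  case (Box \<gamma>)
  then have "Ann \<psi> (Ann c \<gamma>) \<in> G" for c using mcs_Ann_Ann_if_not_IntOp by blast
  then show ?case using apal_theory_DR5[OF mcs_theory, of "NAnn \<psi> Hole" \<gamma>] by simp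
qed (simp_all add: mcs_R1 mcs_R2 mcs_R3 mcs_R4 mcs_R5)

lemma mcs_Ann_mp:
  assumes "Ann \<psi> (Imp \<phi> \<rho>) \<in> G" "Ann \<psi> \<phi> \<in> G" shows "Ann \<psi> \<rho> \<in> G"
proof (cases "IntOp \<psi> \<in> G")
  case True
  with assms show ?thesis by (simp add: mcs_R2 mcs_R3)
next
  case False
  then show ?thesis by (rule mcs_Ann_if_not_IntOp)
qed

lemma mcs_Ann_Box_iff: "Ann \<psi> (Box \<phi>) \<in> G \<longleftrightarrow> (\<forall>c. pal c \<longrightarrow> Ann \<psi> (Ann c \<phi>) \<in> G)"
proof
  show "\<forall>c. pal c \<longrightarrow> Ann \<psi> (Ann c \<phi>) \<in> G" if "Ann \<psi> (Box \<phi>) \<in> G"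
    using mcs_Ann_mp[OF mcs_thm[OF NecAnn[OF R7]] that] by blast
  show "Ann \<psi> (Box \<phi>) \<in> G" if "\<forall>c. pal c \<longrightarrow> Ann \<psi> (Ann c \<phi>) \<in> G"
    using that apal_theory_DR5[OF mcs_theory, of "NAnn \<psi> Hole" \<phi>] by simp
qed

end

context
  fixes G :: "('p::countable, 'a::countable) fm set"
  assumes G: "mcs G"
begin

lemma mcs_K_agree:
  assumes H: "mcs H" and sub: "\<And>\<gamma>. K i \<gamma> \<in> G \<Longrightarrow> K i \<gamma> \<in> H"
  shows "K i \<gamma> \<in> G \<longleftrightarrow> K i \<gamma> \<in> H"
proof
  assume "K i \<gamma> \<in> H"
  show "K i \<gamma> \<in> G"
  proof (rule ccontr)
    assume "K i \<gamma> \<notin> G"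
    then have "Neg (K i \<gamma>) \<in> H" using sub mcs_K_5[OF G] mcs_K_T[OF H] by blast
    with H \<open>K i \<gamma> \<in> H\<close> show False by simp
  qed
qed (rule sub)

lemma mcs_K_witness:
  assumes "K i \<phi> \<notin> G"
  obtains H where "mcs H" "\<And>\<gamma>. K i \<gamma> \<in> G \<longleftrightarrow> K i \<gamma> \<in> H" "\<phi> \<notin> H"
proof -
  let ?D = "{\<gamma>. fill (NK i Hole) \<gamma> \<in> G}"
  have D: "apal_theory ?D"
    using apal_theory_fill_preimage[OF mcs_theory[OF G], of "NK i Hole"] mcs_thm[OF G NecK] mcs_K_mp[OF G] by simp
  have "Neg (Neg \<phi>) \<notin> ?D"
    using assms mcs_K_mono[OF G Taut, of "Neg (Neg \<phi>)" \<phi>] by (auto simp: tautology_def)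
  then obtain H where H: "mcs H" "?D \<subseteq> H" "Neg \<phi> \<in> H" using lindenbaum[OF D] by blast
  have "K i \<gamma> \<in> G \<longleftrightarrow> K i \<gamma> \<in> H" for \<gamma>
    by (rule mcs_K_agree[OF H(1)]) (use mcs_K_4[OF G] H(2) in auto)
  with H show thesis by (intro that) auto
qed

lemma mcs_IntOp_witness:
  assumes "IntOp \<phi> \<notin> G" "IntOp \<psi> \<in> G"
  obtains H where "mcs H" "\<And>i \<gamma>. K i \<gamma> \<in> G \<longleftrightarrow> K i \<gamma> \<in> H" "IntOp \<psi> \<in> H" "\<phi> \<notin> H"
proof -
  let ?D = "{\<gamma>. fill (NInt Hole) \<gamma> \<in> G}"
  have D: "apal_theory ?D"
    using apal_theory_fill_preimage[OF mcs_theory[OF G], of "NInt Hole"] mcs_thm[OF G NecInt] mcs_IntOp_mp[OF G]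
    by simp
  have "Neg (Conj (IntOp \<psi>) (Neg \<phi>)) \<notin> ?D"
  proof
    assume "Neg (Conj (IntOp \<psi>) (Neg \<phi>)) \<in> ?D"
    then have "IntOp (Imp (IntOp \<psi>) \<phi>) \<in> G" by simp
    moreover have "IntOp (IntOp \<psi>) \<in> G" using assms(2) mcs_IntOp_IntOp[OF G] by blast
    ultimately show False using assms(1) mcs_IntOp_mp[OF G] by blast
  qed
  then obtain H where H: "mcs H" "?D \<subseteq> H" "Conj (IntOp \<psi>) (Neg \<phi>) \<in> H"
    using lindenbaum[OF D] by blast
  have "K i \<gamma> \<in> H" if "K i \<gamma> \<in> G" for i \<gamma>
    using mcs_K_IntOp[OF G mcs_K_4[OF G that]] H(2) by auto
  then have "K i \<gamma> \<in> G \<longleftrightarrow> K i \<gamma> \<in> H" for i \<gamma>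
    by (rule mcs_K_agree[OF H(1)])
  with H show thesis by (intro that) auto
qed

end

lemma apal_thm_if_mem_all_mcs:
  fixes \<phi> :: "('p::countable, 'a::countable) fm"
  assumes "\<And>G. mcs G \<Longrightarrow> \<phi> \<in> G"
  shows "apal_thm \<phi>"
proof (rule ccontr)
  assume "\<not> apal_thm \<phi>"
  then have "Neg (Neg \<phi>) \<notin> {\<phi>. apal_thm \<phi>}"
    using MP[OF Taut[of "Imp (Neg (Neg \<phi>)) \<phi>"]] by (auto simp: tautology_def)
  then obtain H where "mcs H" "Neg \<phi> \<in> H" using lindenbaum[OF apal_theory_apal_thm] by blast
  then show False using assms by simp
qed

lemma mcs_IntOp_cong:
  fixes \<phi> \<psi> :: "('p::countable, 'a::countable) fm"
  assumes "\<And>H. mcs H \<Longrightarrow> \<phi> \<in> H \<longleftrightarrow> \<psi> \<in> H" "mcs G"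
  shows "IntOp \<phi> \<in> G \<longleftrightarrow> IntOp \<psi> \<in> G"
proof -
  have "apal_thm (Imp \<phi> \<psi>)" "apal_thm (Imp \<psi> \<phi>)"
    using assms(1) by (auto intro!: apal_thm_if_mem_all_mcs)
  then show ?thesis using mcs_IntOp_mono[OF assms(2)] by blast
qed

text \<open>Axiom R6 composes the announcements \<open>\<psi>\<close> and \<open>\<phi>\<close> into \<open>\<not>[\<psi>]\<not>int \<phi>\<close>.\<close>
lemma mcs_IntOp_composed_announcement:
  fixes \<psi> \<phi> :: "('p::countable, 'a::countable) fm"
  assumes "mcs G"
  shows "IntOp (Neg (Ann \<psi> (Neg (IntOp \<phi>)))) \<in> G \<longleftrightarrow> IntOp \<psi> \<in> G \<and> IntOp (Ann \<psi> \<phi>) \<in> G"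
proof -
  have "Neg (Ann \<psi> (Neg (IntOp \<phi>))) \<in> H \<longleftrightarrow> Conj (IntOp \<psi>) (IntOp (Ann \<psi> \<phi>)) \<in> H"
    if "mcs H" for H
    using that by (simp add: mcs_R2 mcs_R4)
  then show ?thesis
    using mcs_IntOp_cong[OF _ assms] mcs_IntOp_Conj[OF assms] mcs_IntOp_IntOp[OF assms] by blast
qed

lemma dom_restr: "dom (restr \<theta> U) = dom \<theta> \<inter> U"
  by (auto simp: restr_def split: if_splits)

lemma nb_restr: "x \<in> U \<Longrightarrow> x \<in> dom \<theta> \<Longrightarrow> nb (restr \<theta> U) x i = nb \<theta> x i \<inter> U"
  by (auto simp: restr_def nb_def)

lemma restr_restr: "restr (restr \<theta> A) B = restr \<theta> (A \<inter> B)"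
  by (rule ext) (auto simp: restr_def option.map_comp o_def Int_assoc intro!: option.map_cong)

lemma nbhd_funD:
  assumes "nbhd_fun T \<theta>" "x \<in> dom \<theta>"
  shows "openin T (nb \<theta> x i)" "x \<in> nb \<theta> x i" "nb \<theta> x i \<subseteq> dom \<theta>"
    and "y \<in> dom \<theta> \<Longrightarrow> y \<in> nb \<theta> x i \<Longrightarrow> nb \<theta> x i = nb \<theta> y i"
  using assms unfolding nbhd_fun_def by blast+

lemma nbhd_fun_restr:
  assumes \<theta>: "nbhd_fun T \<theta>" and U: "openin T U"
  shows "nbhd_fun T (restr \<theta> U)"
  unfolding nbhd_fun_def dom_restr
proof (intro conjI ballI allI impI)
  show "dom \<theta> \<inter> U \<subseteq> topspace T" using \<theta> unfolding nbhd_fun_def by blast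
next
  fix x i assume x: "x \<in> dom \<theta> \<inter> U"
  then have nb: "nb (restr \<theta> U) x i = nb \<theta> x i \<inter> U" by (simp add: nb_restr)
  have "openin T (nb \<theta> x i)" "x \<in> nb \<theta> x i" "nb \<theta> x i \<subseteq> dom \<theta>"
    using nbhd_funD[OF \<theta>] x by blast+
  then show "openin T (nb (restr \<theta> U) x i)" "x \<in> nb (restr \<theta> U) x i"
    "nb (restr \<theta> U) x i \<subseteq> dom \<theta> \<inter> U"
    using U x by (auto simp: nb openin_Int)
  fix y assume "y \<in> dom \<theta> \<inter> U" "y \<in> nb (restr \<theta> U) x i"
  then show "nb (restr \<theta> U) x i = nb (restr \<theta> U) y i"
    using nbhd_funD(4)[OF \<theta>, of x y i] x by (simp add: nb nb_restr)
qed

lemma valid_inD: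
  fixes T :: "'x topology"
  assumes "valid_in TYPE('x) \<phi>" "topo_model T \<Phi> V" "\<theta> \<in> \<Phi>" "x \<in> dom \<theta>"
  shows "sat T V \<theta> x \<phi>"
  using assms unfolding valid_in_def by blast

section \<open>The canonical model\<close>

text \<open>Validity only quantifies over models whose points have type \<open>'x\<close>, so the
  maximal consistent sets are embedded into \<open>'x\<close> by the injection \<open>f\<close>. The
  neighbourhood of a point for agent \<open>i\<close> is its \<open>K\<^sub>i\<close>-equivalence class, and the open
  sets are generated by the sets \<open>|int \<psi>|\<close> intersected with the class of a point
  under all agents simultaneously.\<close>
locale canonical =
  fixes f :: "('p::countable, 'a::countable) fm set \<Rightarrow> 'x"
  assumes inj_f: "inj f"
begin

definition points :: "'x set" where
  "points = f ` {G. mcs G}"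

definition mcs_of :: "'x \<Rightarrow> ('p, 'a) fm set" where
  "mcs_of x = inv f x"

definition hat :: "('p, 'a) fm \<Rightarrow> 'x set" where
  "hat \<phi> = {y \<in> points. \<phi> \<in> mcs_of y}"

definition K_equiv :: "'a \<Rightarrow> 'x \<Rightarrow> 'x \<Rightarrow> bool" where
  "K_equiv i x y \<longleftrightarrow> (\<forall>\<gamma>. K i \<gamma> \<in> mcs_of x \<longleftrightarrow> K i \<gamma> \<in> mcs_of y)"

definition K_cell :: "'x \<Rightarrow> 'a \<Rightarrow> 'x set" where
  "K_cell x i = {y \<in> points. K_equiv i x y}"

definition basic :: "'x \<Rightarrow> ('p, 'a) fm \<Rightarrow> 'x set" where
  "basic x \<psi> = {y \<in> points. (\<forall>i. K_equiv i x y) \<and> IntOp \<psi> \<in> mcs_of y}"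

definition canon_open :: "'x set \<Rightarrow> bool" where
  "canon_open U \<longleftrightarrow> U \<subseteq> points \<and> (\<forall>x\<in>U. \<exists>\<psi>. IntOp \<psi> \<in> mcs_of x \<and> basic x \<psi> \<subseteq> U)"

definition canon_top :: "'x topology" where
  "canon_top = topology canon_open"

definition canon_nbhd :: "('x, 'a) nfun" where
  "canon_nbhd x = (if x \<in> points then Some (K_cell x) else None)"

definition canon_Phi :: "('x, 'a) nfun set" where
  "canon_Phi = {restr canon_nbhd U | U. openin canon_top U}"

definition canon_val :: "'p \<Rightarrow> 'x set" where
  "canon_val p = hat (Atom p)"

lemma mcs_of_f [simp]: "mcs_of (f G) = G"
  by (simp add: mcs_of_def inj_f)

lemma mcs_mcs_of: "x \<in> points \<Longrightarrow> mcs (mcs_of x)"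
  by (auto simp: points_def)

lemma f_in_points: "mcs G \<Longrightarrow> f G \<in> points"
  by (simp add: points_def)

lemma hat_subset_points: "hat \<phi> \<subseteq> points"
  by (auto simp: hat_def)

lemma basic_Conj: "basic x (Conj \<psi> \<psi>') = basic x \<psi> \<inter> basic x \<psi>'"
  using mcs_IntOp_Conj[OF mcs_mcs_of] by (auto simp: basic_def)

lemma canon_open_Int:
  assumes S: "canon_open S" and U: "canon_open U" shows "canon_open (S \<inter> U)"
  unfolding canon_open_def
proof (intro conjI ballI)
  show "S \<inter> U \<subseteq> points" using S by (simp add: canon_open_def le_infI1)
  fix x assume x: "x \<in> S \<inter> U"
  then obtain \<psi> \<psi>' where "IntOp \<psi> \<in> mcs_of x" "basic x \<psi> \<subseteq> S"
    "IntOp \<psi>' \<in> mcs_of x" "basic x \<psi>' \<subseteq> U"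
    using S U unfolding canon_open_def by (meson IntD1 IntD2)
  moreover have "mcs (mcs_of x)"
    using x S mcs_mcs_of unfolding canon_open_def by (meson IntD1 subsetD)
  ultimately have "IntOp (Conj \<psi> \<psi>') \<in> mcs_of x" "basic x (Conj \<psi> \<psi>') \<subseteq> S \<inter> U"
    unfolding basic_Conj by (simp add: mcs_IntOp_Conj, blast)
  then show "\<exists>\<psi>. IntOp \<psi> \<in> mcs_of x \<and> basic x \<psi> \<subseteq> S \<inter> U" by blast
qed

lemma istopology_canon_open: "istopology canon_open"
  unfolding istopology_def
proof (intro conjI allI impI)
  show "canon_open (S \<inter> U)" if "canon_open S" "canon_open U" for S U
    using that by (rule canon_open_Int)
  show "canon_open (\<Union>\<U>)" if \<U>: "\<forall>U\<in>\<U>. canon_open U" for \<U>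
    unfolding canon_open_def
  proof (intro conjI ballI)
    show "\<Union>\<U> \<subseteq> points" using \<U> by (simp add: canon_open_def Sup_le_iff)
    fix x assume "x \<in> \<Union>\<U>"
    then obtain U where "U \<in> \<U>" "x \<in> U" by blast
    with \<U> obtain \<psi> where "IntOp \<psi> \<in> mcs_of x" "basic x \<psi> \<subseteq> U"
      unfolding canon_open_def by blast
    with \<open>U \<in> \<U>\<close> show "\<exists>\<psi>. IntOp \<psi> \<in> mcs_of x \<and> basic x \<psi> \<subseteq> \<Union>\<U>" by blast
  qed
qed

lemma openin_canon_top: "openin canon_top = canon_open"
  using istopology_canon_open by (simp add: canon_top_def)

lemma canon_open_points: "canon_open points"
  unfolding canon_open_def basic_def using mcs_IntOp_verum[OF mcs_mcs_of] by blast

lemma topspace_canon_top: "topspace canon_top = points"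
  using canon_open_points by (auto simp: topspace_def openin_canon_top canon_open_def)

lemma canon_open_K_cell: "canon_open (K_cell x i)"
  unfolding canon_open_def
proof (intro conjI ballI)
  fix y assume y: "y \<in> K_cell x i"
  then have "basic y verum \<subseteq> K_cell x i"
    unfolding basic_def K_cell_def K_equiv_def by blast
  then show "\<exists>\<psi>. IntOp \<psi> \<in> mcs_of y \<and> basic y \<psi> \<subseteq> K_cell x i"
    using y mcs_IntOp_verum[OF mcs_mcs_of] by (auto simp: K_cell_def)
qed (auto simp: K_cell_def)

lemma canon_open_hat_IntOp: "canon_open (hat (IntOp \<phi>))"
  unfolding canon_open_def using hat_subset_points by (auto simp: hat_def basic_def)

lemma mcs_of_K_iff:
  assumes x: "x \<in> points"
  shows "K i \<phi> \<in> mcs_of x \<longleftrightarrow> (\<forall>y\<in>K_cell x i. \<phi> \<in> mcs_of y)"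
proof
  show "\<forall>y\<in>K_cell x i. \<phi> \<in> mcs_of y" if "K i \<phi> \<in> mcs_of x"
    using that mcs_K_T[OF mcs_mcs_of] by (auto simp: K_cell_def K_equiv_def)
  show "K i \<phi> \<in> mcs_of x" if all: "\<forall>y\<in>K_cell x i. \<phi> \<in> mcs_of y"
  proof (rule ccontr)
    assume "K i \<phi> \<notin> mcs_of x"
    then obtain H where "mcs H" "\<And>\<gamma>. K i \<gamma> \<in> mcs_of x \<longleftrightarrow> K i \<gamma> \<in> H" "\<phi> \<notin> H"
      using mcs_K_witness[OF mcs_mcs_of[OF x]] by blast
    then show False
      using all f_in_points[of H] by (auto simp: K_cell_def K_equiv_def)
  qed
qed

lemma interior_hat: "canon_top interior_of hat \<phi> = hat (IntOp \<phi>)"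
proof
  have "hat (IntOp \<phi>) \<subseteq> hat \<phi>" using mcs_IntOp_T[OF mcs_mcs_of] by (auto simp: hat_def)
  then show "hat (IntOp \<phi>) \<subseteq> canon_top interior_of hat \<phi>"
    using canon_open_hat_IntOp by (auto simp: interior_of_def openin_canon_top)
next
  show "canon_top interior_of hat \<phi> \<subseteq> hat (IntOp \<phi>)"
  proof
    fix x assume "x \<in> canon_top interior_of hat \<phi>"
    then obtain U where U: "canon_open U" "x \<in> U" "U \<subseteq> hat \<phi>"
      unfolding interior_of_def openin_canon_top by blast
    then have x: "x \<in> points" by (auto simp: canon_open_def)
    obtain \<psi> where \<psi>: "IntOp \<psi> \<in> mcs_of x" "basic x \<psi> \<subseteq> U"
      using U unfolding canon_open_def by blast
    have "IntOp \<phi> \<in> mcs_of x"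
    proof (rule ccontr)
      assume "IntOp \<phi> \<notin> mcs_of x"
      then obtain H where H: "mcs H" "\<And>i \<gamma>. K i \<gamma> \<in> mcs_of x \<longleftrightarrow> K i \<gamma> \<in> H"
        "IntOp \<psi> \<in> H" "\<phi> \<notin> H"
        using mcs_IntOp_witness[OF mcs_mcs_of[OF x] _ \<psi>(1)] by blast
      then have "f H \<in> basic x \<psi>" using f_in_points by (simp add: basic_def K_equiv_def)
      then show False using \<psi>(2) U(3) H(4) by (auto simp: hat_def)
    qed
    then show "x \<in> hat (IntOp \<phi>)" using x by (simp add: hat_def)
  qed
qed

lemma dom_canon_nbhd: "dom canon_nbhd = points"
  by (auto simp: canon_nbhd_def split: if_splits)

lemma nb_canon_nbhd: "x \<in> points \<Longrightarrow> nb canon_nbhd x i = K_cell x i"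
  by (simp add: canon_nbhd_def nb_def)

lemma K_cell_eq: "y \<in> K_cell x i \<Longrightarrow> K_cell x i = K_cell y i"
  unfolding K_cell_def K_equiv_def by blast

lemma nbhd_fun_canon_nbhd: "nbhd_fun canon_top canon_nbhd"
  unfolding nbhd_fun_def dom_canon_nbhd topspace_canon_top
proof (intro conjI ballI allI impI subset_refl)
  fix x i assume x: "x \<in> points"
  show "openin canon_top (nb canon_nbhd x i)"
    by (simp add: nb_canon_nbhd[OF x] openin_canon_top canon_open_K_cell)
  show "x \<in> nb canon_nbhd x i" "nb canon_nbhd x i \<subseteq> points"
    using x by (simp_all add: nb_canon_nbhd K_cell_def K_equiv_def)
  fix y assume "y \<in> points" "y \<in> nb canon_nbhd x i"
  then show "nb canon_nbhd x i = nb canon_nbhd y i"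
    using x K_cell_eq[of y x i] by (simp add: nb_canon_nbhd)
qed

lemma restr_canon_nbhd_points: "restr canon_nbhd points = canon_nbhd"
proof -
  have "K_cell x i \<inter> points = K_cell x i" for x i by (auto simp: K_cell_def)
  then show ?thesis by (intro ext) (simp add: restr_def canon_nbhd_def)
qed

lemma canon_nbhd_in_canon_Phi: "canon_nbhd \<in> canon_Phi"
proof -
  have "canon_nbhd = restr canon_nbhd points" "openin canon_top points"
    by (simp_all add: restr_canon_nbhd_points openin_canon_top canon_open_points)
  then show ?thesis unfolding canon_Phi_def by blast
qed

lemma topo_model_canonical: "topo_model canon_top canon_Phi canon_val"
  unfolding topo_model_def nbhd_set_def
proof (intro conjI allI ballI impI)
  fix \<theta> assume "\<theta> \<in> canon_Phi"
  then obtain U where U: "\<theta> = restr canon_nbhd U" "openin canon_top U"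
    unfolding canon_Phi_def by blast
  then show "nbhd_fun canon_top \<theta>"
    using nbhd_fun_restr nbhd_fun_canon_nbhd by blast
  fix U' assume "openin canon_top U'"
  then have "openin canon_top (U \<inter> U')" using U(2) by (simp add: openin_Int)
  then show "restr \<theta> U' \<in> canon_Phi" unfolding U(1) restr_restr canon_Phi_def by blast
next
  show "canon_val p \<subseteq> topspace canon_top" for p
    by (simp add: topspace_canon_top canon_val_def hat_subset_points)
qed

end

section \<open>Truth lemma\<close>

lemma fm_announcement_induct [case_names Atom Neg Conj K IntOp Ann Box]:
  assumes "\<And>p. P (Atom p)" "\<And>a. P a \<Longrightarrow> P (Neg a)" "\<And>a b. P a \<Longrightarrow> P b \<Longrightarrow> P (Conj a b)"
    "\<And>i a. P a \<Longrightarrow> P (K i a)" "\<And>a. P a \<Longrightarrow> P (IntOp a)"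
    "\<And>a b. P a \<Longrightarrow> P b \<Longrightarrow> P (Ann a b)" "\<And>a. (\<And>c. pal c \<Longrightarrow> P (Ann c a)) \<Longrightarrow> P (Box a)"
  shows "P \<gamma>"
proof (induction \<gamma> rule: wf_induct_rule[OF wf_measures[of "[boxdepth, size]"]])
  case (1 \<gamma>)
  have smaller: "P \<delta>" if "boxdepth \<delta> \<le> boxdepth \<gamma>" "size \<delta> < size \<gamma>" for \<delta>
    using that by (intro 1) (auto simp: le_less)
  have announced: "P (Ann c a)" if "\<gamma> = Box a" "pal c" for a c
    using that by (intro 1) (simp add: pal_boxdepth)
  show ?case
  proof (cases \<gamma>)
    case (Box a)
    then show ?thesis using assms(7) announced by blast
  qed (simp_all add: assms(1-6) smaller)
qed

lemma sat_Box_iff: "sat T V \<theta> x (Box \<phi>) \<longleftrightarrow> (\<forall>c. pal c \<longrightarrow> sat T V \<theta> x (Ann c \<phi>))"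
  by simp

context canonical
begin

abbreviation csat :: "('x, 'a) nfun \<Rightarrow> 'x \<Rightarrow> ('p, 'a) fm \<Rightarrow> bool" where
  "csat \<equiv> sat canon_top canon_val"

definition canon_update :: "('p, 'a) fm \<Rightarrow> ('x, 'a) nfun" where
  "canon_update \<psi> = restr canon_nbhd (hat (IntOp \<psi>))"

text \<open>By the clause for announcements and \<open>interior_hat\<close>, announcing \<open>\<psi>\<close> in the
  canonical model yields \<open>canon_update \<psi>\<close>; its truth lemma is stated in terms of \<open>[\<psi>]\<close>.\<close>
definition truthful_after :: "('p, 'a) fm \<Rightarrow> bool" where
  "truthful_after \<delta> \<longleftrightarrow>
     (\<forall>\<psi>. \<forall>y\<in>hat (IntOp \<psi>). csat (canon_update \<psi>) y \<delta> \<longleftrightarrow> Ann \<psi> \<delta> \<in> mcs_of y)"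

lemma dom_canon_update: "dom (canon_update \<psi>) = hat (IntOp \<psi>)"
  using hat_subset_points by (auto simp: canon_update_def dom_restr dom_canon_nbhd)

lemma nb_canon_update:
  assumes "x \<in> hat (IntOp \<psi>)" shows "nb (canon_update \<psi>) x i = K_cell x i \<inter> hat (IntOp \<psi>)"
proof -
  have "x \<in> points" using assms hat_subset_points by blast
  with assms show ?thesis by (simp add: canon_update_def nb_restr dom_canon_nbhd nb_canon_nbhd)
qed

lemma hat_Conj: "hat (Conj \<phi> \<psi>) = hat \<phi> \<inter> hat \<psi>"
  using mcs_mcs_of by (auto simp: hat_def)

lemma hat_IntOp_Conj: "hat (IntOp (Conj \<phi> \<psi>)) = hat (IntOp \<phi>) \<inter> hat (IntOp \<psi>)"
  using mcs_IntOp_Conj[OF mcs_mcs_of] by (auto simp: hat_def)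

lemma hat_IntOp_IntOp: "hat (IntOp (IntOp \<phi>)) = hat (IntOp \<phi>)"
  using mcs_IntOp_IntOp[OF mcs_mcs_of] by (auto simp: hat_def)

lemma Ann_in_mcs_of_if_notin_hat_IntOp:
  "y \<in> points \<Longrightarrow> y \<notin> hat (IntOp \<psi>) \<Longrightarrow> Ann \<psi> \<delta> \<in> mcs_of y"
  using mcs_Ann_if_not_IntOp[OF mcs_mcs_of] by (auto simp: hat_def)

lemma truth_set_canon_update:
  assumes "truthful_after \<delta>"
  shows "{y \<in> dom (canon_update \<psi>). csat (canon_update \<psi>) y \<delta>} = hat (IntOp \<psi>) \<inter> hat (Ann \<psi> \<delta>)"
  using assms hat_subset_points by (auto simp: dom_canon_update truthful_after_def hat_def)

lemma interior_truth_set_canon_update: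
  assumes "truthful_after \<delta>"
  shows "canon_top interior_of {y \<in> dom (canon_update \<psi>). csat (canon_update \<psi>) y \<delta>}
    = hat (IntOp \<psi>) \<inter> hat (IntOp (Ann \<psi> \<delta>))"
proof -
  have "{y \<in> dom (canon_update \<psi>). csat (canon_update \<psi>) y \<delta>} = hat (Conj (IntOp \<psi>) (Ann \<psi> \<delta>))"
    by (simp add: truth_set_canon_update[OF assms] hat_Conj)
  then show ?thesis by (simp add: interior_hat hat_IntOp_Conj hat_IntOp_IntOp)
qed

lemma truthful_after_K:
  assumes "truthful_after \<delta>" shows "truthful_after (K i \<delta>)"
  unfolding truthful_after_def
proof (intro allI ballI)
  fix \<psi> x assume x: "x \<in> hat (IntOp \<psi>)"
  then have m: "x \<in> points" "IntOp \<psi> \<in> mcs_of x" by (auto simp: hat_def)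
  have "csat (canon_update \<psi>) x (K i \<delta>) \<longleftrightarrow> (\<forall>y\<in>K_cell x i \<inter> hat (IntOp \<psi>). Ann \<psi> \<delta> \<in> mcs_of y)"
    using assms by (simp add: nb_canon_update[OF x] truthful_after_def)
  also have "\<dots> \<longleftrightarrow> (\<forall>y\<in>K_cell x i. Ann \<psi> \<delta> \<in> mcs_of y)"
    using Ann_in_mcs_of_if_notin_hat_IntOp by (auto simp: K_cell_def)
  also have "\<dots> \<longleftrightarrow> Ann \<psi> (K i \<delta>) \<in> mcs_of x"
    using mcs_of_K_iff[OF m(1)] mcs_R5[OF mcs_mcs_of[OF m(1)]] m(2) by simp
  finally show "csat (canon_update \<psi>) x (K i \<delta>) \<longleftrightarrow> Ann \<psi> (K i \<delta>) \<in> mcs_of x" .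
qed

lemma truthful_after_IntOp:
  assumes "truthful_after \<delta>" shows "truthful_after (IntOp \<delta>)"
  unfolding truthful_after_def
proof (intro allI ballI)
  fix \<psi> x assume x: "x \<in> hat (IntOp \<psi>)"
  then have m: "x \<in> points" "IntOp \<psi> \<in> mcs_of x" by (auto simp: hat_def)
  then show "csat (canon_update \<psi>) x (IntOp \<delta>) \<longleftrightarrow> Ann \<psi> (IntOp \<delta>) \<in> mcs_of x"
    using interior_truth_set_canon_update[OF assms] x mcs_R4[OF mcs_mcs_of[OF m(1)]]
    by (simp add: hat_def)
qed

lemma truthful_after_Ann:
  assumes a: "truthful_after a" and b: "truthful_after b" shows "truthful_after (Ann a b)"
  unfolding truthful_after_def
proof (intro allI ballI)
  fix \<psi> x assume x: "x \<in> hat (IntOp \<psi>)"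
  then have m: "x \<in> points" by (auto simp: hat_def)
  let ?\<psi>' = "Neg (Ann \<psi> (Neg (IntOp a)))"
  have composed: "hat (IntOp \<psi>) \<inter> hat (IntOp (Ann \<psi> a)) = hat (IntOp ?\<psi>')"
    using mcs_IntOp_composed_announcement[OF mcs_mcs_of] by (auto simp: hat_def)
  have "canon_top interior_of {y \<in> dom (canon_update \<psi>). csat (canon_update \<psi>) y a}
      = hat (IntOp ?\<psi>')"
    using interior_truth_set_canon_update[OF a] composed by simp
  moreover have "hat (IntOp \<psi>) \<inter> hat (IntOp ?\<psi>') = hat (IntOp ?\<psi>')"
    using composed by blast
  then have "restr (canon_update \<psi>) (hat (IntOp ?\<psi>')) = canon_update ?\<psi>'"
    by (simp add: canon_update_def restr_restr)
  ultimately have "csat (canon_update \<psi>) x (Ann a b) \<longleftrightarrow>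
      (x \<in> hat (IntOp ?\<psi>') \<longrightarrow> csat (canon_update ?\<psi>') x b)"
    by simp
  also have "\<dots> \<longleftrightarrow> Ann ?\<psi>' b \<in> mcs_of x"
    using b Ann_in_mcs_of_if_notin_hat_IntOp[OF m] by (auto simp: truthful_after_def)
  also have "\<dots> \<longleftrightarrow> Ann \<psi> (Ann a b) \<in> mcs_of x"
    using mcs_R6[OF mcs_mcs_of[OF m]] by simp
  finally show "csat (canon_update \<psi>) x (Ann a b) \<longleftrightarrow> Ann \<psi> (Ann a b) \<in> mcs_of x" .
qed

lemma truthful_after_Box:
  assumes "\<And>c. pal c \<Longrightarrow> truthful_after (Ann c \<delta>)" shows "truthful_after (Box \<delta>)"
  unfolding truthful_after_def
proof (intro allI ballI)
  fix \<psi> x assume x: "x \<in> hat (IntOp \<psi>)"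
  then have m: "x \<in> points" by (auto simp: hat_def)
  have "csat (canon_update \<psi>) x (Box \<delta>) \<longleftrightarrow> (\<forall>c. pal c \<longrightarrow> Ann \<psi> (Ann c \<delta>) \<in> mcs_of x)"
    using assms x unfolding sat_Box_iff truthful_after_def by blast
  then show "csat (canon_update \<psi>) x (Box \<delta>) \<longleftrightarrow> Ann \<psi> (Box \<delta>) \<in> mcs_of x"
    using mcs_Ann_Box_iff[OF mcs_mcs_of[OF m]] by simp
qed

lemma truthful_after: "truthful_after \<gamma>"
proof (induction \<gamma> rule: fm_announcement_induct)
  case (Atom p)
  show ?case
    using mcs_R1[OF mcs_mcs_of] by (auto simp: truthful_after_def canon_val_def hat_def)
next
  case (Neg a)
  then show ?case using mcs_R2[OF mcs_mcs_of] by (auto simp: truthful_after_def hat_def)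
next
  case (Conj a b)
  then show ?case using mcs_R3[OF mcs_mcs_of] by (auto simp: truthful_after_def hat_def)
qed (simp_all add: truthful_after_K truthful_after_IntOp truthful_after_Ann truthful_after_Box)

lemma canonical_truth: "x \<in> points \<Longrightarrow> csat canon_nbhd x \<gamma> \<longleftrightarrow> \<gamma> \<in> mcs_of x"
proof (induction \<gamma> arbitrary: x rule: fm_announcement_induct)
  case (K i a)
  then show ?case
    using mcs_of_K_iff[OF K.prems] by (simp add: nb_canon_nbhd K_cell_def)
next
  case (IntOp a)
  then have "{y \<in> dom canon_nbhd. csat canon_nbhd y a} = hat a"
    by (auto simp: dom_canon_nbhd hat_def)
  then show ?case using IntOp.prems interior_hat[of a] by (simp add: hat_def)
next
  case (Ann a b)
  then have "{y \<in> dom canon_nbhd. csat canon_nbhd y a} = hat a"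
    by (auto simp: dom_canon_nbhd hat_def)
  then have "csat canon_nbhd x (Ann a b) \<longleftrightarrow>
      (x \<in> hat (IntOp a) \<longrightarrow> csat (canon_update a) x b)"
    using interior_hat[of a] by (simp add: canon_update_def)
  then show ?case
    using truthful_after[of b] Ann_in_mcs_of_if_notin_hat_IntOp[OF Ann.prems]
    by (auto simp: truthful_after_def)
next
  case (Box a)
  then show ?case using mcs_Box_iff[OF mcs_mcs_of[OF Box.prems]] by simp
qed (auto simp: canon_val_def hat_def mcs_mcs_of)

end

theorem mainTheorem3:
  fixes \<phi> :: "('p :: countable, 'a :: finite) fm"
  assumes "\<exists>f :: ('p, 'a) fm set \<Rightarrow> 'x. inj f"
    and "valid_in TYPE('x) \<phi>"
  shows "apal_thm \<phi>"
proof -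
  obtain f :: "('p, 'a) fm set \<Rightarrow> 'x" where "inj f" using assms(1) by blast
  then interpret canonical f by unfold_locales
  show ?thesis
  proof (rule apal_thm_if_mem_all_mcs)
    fix G :: "('p, 'a) fm set" assume "mcs G"
    then have x: "f G \<in> points" by (rule f_in_points)
    then have "csat canon_nbhd (f G) \<phi>"
      using valid_inD[OF assms(2) topo_model_canonical canon_nbhd_in_canon_Phi]
      by (simp add: dom_canon_nbhd)
    then show "\<phi> \<in> G" using canonical_truth[OF x] by simp
  qed
qed

end
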